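(* Let $\mathbf U$ be a real $3\times3$ positive-definite symmetric matrix, $|\hat{\mathbf e}|=1$, $\hat{\mathbf U}=(-\mathbf I+2\hat{\mathbf e}\otimes\hat{\mathbf e})\mathbf U(-\mathbf I+2\hat{\mathbf e}\otimes\hat{\mathbf e})$, and let $\hat{\mathbf R}\in\mathrm{SO}(3)$, nonzero $\mathbf a,\mathbf n\in\mathbb R^3$ satisfy $\hat{\mathbf R}\hat{\mathbf U}=\mathbf U+\mathbf a\otimes\mathbf n$. Suppose the cofactor conditions hold: (CC1) the middle eigenvalue of $\mathbf U$ equals $1$; (CC2) $\mathbf a\cdot\mathbf U\,\mathrm{cof}(\mathbf U^2-\mathbf I)\mathbf n=0$; (CC3) $\mathrm{tr}\,\mathbf U^2-\det\mathbf U^2-\frac{|\mathbf a|^2|\mathbf n|^2}{4}-2\ge0$. For $f\in[0,1]$ let $\mathbf C_f=(\mathbf U+f\,\mathbf n\otimes\mathbf a)(\mathbf U+f\,\mathbf a\otimes\mathbf n)$, whose middle eigenvalue is $1$ for every $f\in[0,1]$, and denote its other two eigenvalues by $\lambda_1(f)^2\le1\le\lambda_3(f)^2$. Then $\lambda_1(f)^2<1<\lambda_3(f)^2$ for all $f\in[0,1]$ with $f\neq1/2$. In particular, the eigenvalues $\lambda_1,\lambda_3$ of $\mathbf U$ other than the middle one satisfy $\lambda_1<1<\lambda_3$.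
   Context: $\mathbf a\otimes\mathbf n$ is the matrix $\mathbf x\mapsto(\mathbf n\cdot\mathbf x)\mathbf a$; $\mathrm{cof}\,\mathbf A$ is the cofactor matrix of $\mathbf A$, $(\mathrm{cof}\,\mathbf A)_{ij}=(-1)^{i+j}\det$ of the submatrix obtained by deleting row $i$ and column $j$. $\lambda_1(f),\lambda_3(f)$ are taken positive. *)

theory Defs
  imports "HOL-Analysis.Analysis"
begin

definition outer :: "real^3 \<Rightarrow> real^3 \<Rightarrow> real^3^3" where
  "outer a n = (\<chi> i j. a $ i * n $ j)"

text \<open>Cofactor matrix of a 3x3 matrix. For 3x3 matrices the entry
  (-1)^(i+j) det(submatrix deleting row i and column j) equals the
  cyclic 2x2 determinant below (indices taken mod 3).\<close>
definition cof3 :: "real^3^3 \<Rightarrow> real^3^3" where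
  "cof3 A = (\<chi> i j. A $ (i+1) $ (j+1) * A $ (i+2) $ (j+2)
                   - A $ (i+1) $ (j+2) * A $ (i+2) $ (j+1))"

definition sorted_eigs :: "real^3^3 \<Rightarrow> real \<Rightarrow> real \<Rightarrow> real \<Rightarrow> bool" where
  "sorted_eigs A l1 l2 l3 \<longleftrightarrow> l1 \<le> l2 \<and> l2 \<le> l3 \<and>
     (\<forall>t. det (t *\<^sub>R mat 1 - A) = (t - l1) * (t - l2) * (t - l3))"

end

(* Write C f = (U + f n a^T)(U + f a n^T) for the Cauchy-Green tensor of U + f a n^T.
   The twinning equation gives det (U + a n^T) = det U and C 1 = Q U^2 Q for the reflection Q,
   so C 1 - I is conjugate to U^2 - I.  By the rank-one and rank-two determinant expansions,
   det (C f), det (C f - I) and tr (C f) are polynomials of degree at most 2 in f; comparing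
   them at f = 0 and f = 1, using CC1 (det (U^2 - I) = 0) and CC2 (no linear term), gives
     det (C f - I) = 0,   det (C f) = det U^2,   tr (C f) = tr U^2 - f (1 - f) |a|^2 |n|^2.
   So 1 is an eigenvalue of C f, and by CC3
     tr (C f) - det (C f) - 2 >= |a|^2 |n|^2 (f - 1/2)^2 > 0   for f ~= 1/2.
   For eigenvalues 1, x, y the left-hand side is -(x - 1)(y - 1), so x < 1 < y.  For U itself
   tr U^2 - det U^2 - 2 = (1 - l1^2)(l3^2 - 1) > 0. *)

theory Submission
  imports Defs "HOL-Library.Quadratic_Discriminant" "HOL-Real_Asymp.Real_Asymp"
begin

unbundle cross3_syntax

section \<open>Algebra of 3x3 matrices\<close>

text \<open>The index arithmetic \<open>i + 1\<close>, \<open>i + 2\<close> in \<^const>\<open>cof3\<close> has to reduce to \<open>1, 2, 3\<close>.\<close>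

lemma numeral_mod_3 [simp]: "(4::3) = 1" "(5::3) = 2"
  by simp_all

lemma symmetric_entry: "transpose A = A \<Longrightarrow> A $ i $ j = A $ j $ i"
  by (metis transpose_def vec_lambda_beta)

lemma symmetric_inner_commute:
  fixes A :: "real^'n^'n"
  assumes "transpose A = A"
  shows "x \<bullet> (A *v y) = (A *v x) \<bullet> y"
  by (metis assms dot_lmul_matrix transpose_matrix_vector)

lemma matrix_diff_ldistrib:
  fixes A :: "'a::comm_ring_1^'n^'m"
  shows "A ** (B - C) = A ** B - A ** C"
  by (simp add: matrix_matrix_mult_def vec_eq_iff sum_subtractf right_diff_distrib)

lemma matrix_diff_rdistrib:
  fixes A :: "'a::comm_ring_1^'n^'m"
  shows "(A - B) ** C = A ** C - B ** C"
  by (simp add: matrix_matrix_mult_def vec_eq_iff sum_subtractf left_diff_distrib)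

lemma transpose_add_outer:
  assumes "transpose A = A"
  shows "transpose (A + c *\<^sub>R outer x y) = A + c *\<^sub>R outer y x"
  using symmetric_entry[OF assms] by (simp add: vec_eq_iff transpose_def outer_def mult.commute)

lemma outer_scaleR_left: "outer (c *\<^sub>R x) y = c *\<^sub>R outer x y"
  by (simp add: vec_eq_iff outer_def)

lemma trace_outer: "trace (outer x y) = x \<bullet> y"
  by (simp add: trace_def outer_def inner_vec_def sum_3)

lemma transpose_cof3: "transpose (cof3 A) = cof3 (transpose A)"
  by (simp add: vec_eq_iff forall_3 cof3_def transpose_def)

lemma charpoly_3:
  "det (t *\<^sub>R mat 1 - A) = t^3 - trace A * t^2 + trace (cof3 A) * t - det A"
  by (simp add: det_3 trace_def cof3_def sum_3 mat_def algebra_simps power2_eq_square power3_eq_cube)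

lemma trace_square_3: "trace (A ** A) = (trace A)^2 - 2 * trace (cof3 A)"
  by (simp add: trace_def sum_3 matrix_matrix_mult_def cof3_def algebra_simps power2_eq_square)

lemma det_uminus_3: "det (- A) = - det (A::real^3^3)"
  by (simp add: det_3 algebra_simps)

lemma det_add_outer:
  "det (A + outer x y) = det A + x \<bullet> (cof3 A *v y)"
  by (simp add: det_3 outer_def cof3_def inner_vec_def matrix_vector_mult_def sum_3 algebra_simps)

lemma det_add_outer_outer:
  "det (A + outer x y + outer z w) =
     det A + x \<bullet> (cof3 A *v y) + z \<bullet> (cof3 A *v w) + (x \<times> z) \<bullet> (A *v (y \<times> w))"
  by (simp add: det_3 outer_def cof3_def cross_components inner_vec_def matrix_vector_mult_def
      sum_3 algebra_simps)

lemma det_symmetric_rank_two_update: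
  assumes "transpose D = D"
  shows "det (D + f *\<^sub>R (outer b n + outer n b) + g *\<^sub>R outer n n) =
    det D + 2 * f * (b \<bullet> (cof3 D *v n)) + g * (n \<bullet> (cof3 D *v n))
      - f^2 * ((b \<times> n) \<bullet> (D *v (b \<times> n)))"
proof -
  have split: "D + f *\<^sub>R (outer b n + outer n b) + g *\<^sub>R outer n n
      = D + outer (f *\<^sub>R b) n + outer n (f *\<^sub>R b + g *\<^sub>R n)"
    by (simp add: vec_eq_iff outer_def algebra_simps)
  have cof_commute: "n \<bullet> (cof3 D *v b) = b \<bullet> (cof3 D *v n)"
    using symmetric_inner_commute[of "cof3 D" n b] assms by (simp add: transpose_cof3 inner_commute)
  have "D *v (- x) = - (D *v x)" for x
    using matrix_vector_mult_diff_distrib[of D 0 x] by simp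
  then have "((f *\<^sub>R b) \<times> n) \<bullet> (D *v (n \<times> (f *\<^sub>R b + g *\<^sub>R n)))
      = - (f^2 * ((b \<times> n) \<bullet> (D *v (b \<times> n))))"
    by (simp add: cross_mult_left cross_mult_right cross_add_right cross_skew[of n b]
        matrix_vector_mult_scaleR power2_eq_square)
  then show ?thesis
    unfolding split det_add_outer_outer using cof_commute
    by (simp add: matrix_vector_right_distrib matrix_vector_mult_scaleR inner_add_right
        algebra_simps)
qed

section \<open>Ordered eigenvalues of symmetric matrices\<close>

lemma cubic_has_real_root:
  fixes b c d :: real
  shows "\<exists>r. r^3 + b * r^2 + c * r + d = 0"
proof -
  let ?p = "\<lambda>t::real. t^3 + b * t^2 + c * t + d"
  have "eventually (\<lambda>t. ?p t > 0) at_top"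
    by real_asymp
  then obtain x where x: "?p x > 0"
    by (auto simp: eventually_at_top_linorder)
  have "eventually (\<lambda>s. ?p (- s) < 0) at_top"
    by real_asymp
  then obtain N where N: "\<And>s. s \<ge> N \<Longrightarrow> ?p (- s) < 0"
    by (auto simp: eventually_at_top_linorder)
  define y where "y = - max N (- x)"
  have y: "?p y < 0" "y \<le> x"
    using N[of "max N (- x)"] by (auto simp: y_def)
  have "continuous_on {y..x} ?p"
    by (intro continuous_intros)
  then show ?thesis
    using IVT'[of ?p y 0 x] x y by force
qed

text \<open>With \<open>P\<close> the symmetric matrix with rows \<open>(a, b, c)\<close>, \<open>(b, d, e)\<close>, \<open>(c, e, g)\<close> and
  \<open>v = (x, y, z)\<close>, the bound comes from the identity
  \<open>2 \<Delta> |v|\<^sup>4 = S - 4 (tr P) |v|\<^sup>2 (v \<bullet> P v)\<close>, where \<open>\<Delta>\<close> is the discriminant and \<open>S\<close> the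
  sum of squares in the proof.\<close>

lemma discriminant_nonneg_if_isotropic:
  fixes x y z a b c d e g :: real
  assumes isotropic: "x * (a * x + b * y + c * z) + y * (b * x + d * y + e * z)
      + z * (c * x + e * y + g * z) = 0"
    and nonzero: "x * x + y * y + z * z > 0"
  shows "0 \<le> (a + d + g)^2 - 4 * (a * d - b * b + a * g - c * c + d * g - e * e)"
proof -
  let ?r = "x * x + y * y + z * z"
  let ?t = "a + d + g"
  let ?q = "x * (a * x + b * y + c * z) + y * (b * x + d * y + e * z) + z * (c * x + e * y + g * z)"
  let ?\<Delta> = "?t^2 - 4 * (a * d - b * b + a * g - c * c + d * g - e * e)"
  let ?S = "(2 * ?r * a - ?t * (?r - x * x))^2 + (2 * ?r * d - ?t * (?r - y * y))^2
      + (2 * ?r * g - ?t * (?r - z * z))^2 + 2 * (2 * ?r * b + ?t * x * y)^2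
      + 2 * (2 * ?r * c + ?t * x * z)^2 + 2 * (2 * ?r * e + ?t * y * z)^2"
  have "2 * ?\<Delta> * ?r^2 = ?S - 4 * ?t * ?r * ?q"
    by (simp add: algebra_simps power2_eq_square)
  then have "2 * ?\<Delta> * ?r^2 \<ge> 0"
    using isotropic by simp
  then show ?thesis
    using nonzero by (simp add: zero_le_mult_iff)
qed

lemma discriminant_nonneg_if_singular_symmetric:
  assumes "transpose V = V" "V *v v = 0" "v \<noteq> 0"
  shows "0 \<le> (trace V)^2 - 4 * trace (cof3 V)"
proof -
  have "V $ 1 $ 1 * v $ 1 + V $ 1 $ 2 * v $ 2 + V $ 1 $ 3 * v $ 3 = 0"
    "V $ 1 $ 2 * v $ 1 + V $ 2 $ 2 * v $ 2 + V $ 2 $ 3 * v $ 3 = 0"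
    "V $ 1 $ 3 * v $ 1 + V $ 2 $ 3 * v $ 2 + V $ 3 $ 3 * v $ 3 = 0"
    using assms(2) symmetric_entry[OF assms(1), of 2 1] symmetric_entry[OF assms(1), of 3 1]
      symmetric_entry[OF assms(1), of 3 2]
    by (simp_all add: vec_eq_iff forall_3 matrix_vector_mult_def sum_3)
  then have "v $ 1 * (V $ 1 $ 1 * v $ 1 + V $ 1 $ 2 * v $ 2 + V $ 1 $ 3 * v $ 3)
      + v $ 2 * (V $ 1 $ 2 * v $ 1 + V $ 2 $ 2 * v $ 2 + V $ 2 $ 3 * v $ 3)
      + v $ 3 * (V $ 1 $ 3 * v $ 1 + V $ 2 $ 3 * v $ 2 + V $ 3 $ 3 * v $ 3) = 0"
    by simp
  moreover have "v $ 1 * v $ 1 + v $ 2 * v $ 2 + v $ 3 * v $ 3 > 0"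
    using assms(3) by (simp add: inner_vec_def sum_3 flip: inner_gt_zero_iff)
  ultimately have "0 \<le> (V $ 1 $ 1 + V $ 2 $ 2 + V $ 3 $ 3)^2 - 4 * (V $ 1 $ 1 * V $ 2 $ 2
      - V $ 1 $ 2 * V $ 1 $ 2 + V $ 1 $ 1 * V $ 3 $ 3 - V $ 1 $ 3 * V $ 1 $ 3
      + V $ 2 $ 2 * V $ 3 $ 3 - V $ 2 $ 3 * V $ 2 $ 3)"
    by (rule discriminant_nonneg_if_isotropic)
  then show ?thesis
    using symmetric_entry[OF assms(1), of 2 1] symmetric_entry[OF assms(1), of 3 1]
      symmetric_entry[OF assms(1), of 3 2]
    by (simp add: trace_def cof3_def sum_3 algebra_simps)
qed

lemma sorted_eigs_if_charpoly_splits: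
  assumes "\<And>t. det (t *\<^sub>R mat 1 - A) = (t - x) * (t - y) * (t - z)"
  shows "\<exists>l1 l2 l3. sorted_eigs A l1 l2 l3"
proof -
  have "sorted_eigs A x y z \<or> sorted_eigs A x z y \<or> sorted_eigs A y x z \<or>
      sorted_eigs A y z x \<or> sorted_eigs A z x y \<or> sorted_eigs A z y x"
    unfolding sorted_eigs_def assms by (simp add: ac_simps) linarith
  then show ?thesis
    by blast
qed

lemma sorted_eigs_exists_symmetric:
  assumes "transpose U = U"
  shows "\<exists>l1 l2 l3. sorted_eigs U l1 l2 l3"
proof -
  obtain r where "r^3 + (- trace U) * r^2 + trace (cof3 U) * r + (- det U) = 0"
    using cubic_has_real_root by blast
  then have "det (r *\<^sub>R mat 1 - U) = 0"
    by (simp add: charpoly_3)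
  define V where "V = U - r *\<^sub>R mat 1"
  have "det V = 0"
    using \<open>det (r *\<^sub>R mat 1 - U) = 0\<close> det_uminus_3[of "r *\<^sub>R mat 1 - U"] by (simp add: V_def)
  then obtain v where "v \<noteq> 0" "V *v v = 0"
    by (metis invertible_det_nz invertible_left_inverse matrix_left_invertible_ker)
  moreover have "transpose V = V"
    using assms by (simp add: V_def vec_eq_iff transpose_def mat_def)
  ultimately have "0 \<le> (trace V)^2 - 4 * trace (cof3 V)"
    using discriminant_nonneg_if_singular_symmetric by blast
  then obtain x where "x^2 - trace V * x + trace (cof3 V) = 0"
    using discriminant_nonneg_ex[of 1 "- trace V" "trace (cof3 V)"] by (auto simp: discrim_def)
  then have x: "trace (cof3 V) = trace V * x - x^2"
    by simp
  have "det (t *\<^sub>R mat 1 - U) = (t - r) * (t - (r + x)) * (t - (r + (trace V - x)))" for t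
  proof -
    have "det (t *\<^sub>R mat 1 - U) = det ((t - r) *\<^sub>R mat 1 - V)"
      by (simp add: V_def algebra_simps)
    also have "\<dots> = (t - r)^3 - trace V * (t - r)^2 + trace (cof3 V) * (t - r)"
      using \<open>det V = 0\<close> by (simp add: charpoly_3)
    also have "\<dots> = (t - r) * (t - (r + x)) * (t - (r + (trace V - x)))"
      unfolding x by (simp add: power2_eq_square power3_eq_cube algebra_simps)
    finally show ?thesis .
  qed
  then show ?thesis
    by (rule sorted_eigs_if_charpoly_splits)
qed

lemma sorted_eigs_coeffs:
  assumes "sorted_eigs A l1 l2 l3"
  shows "trace A = l1 + l2 + l3" "det A = l1 * l2 * l3"
    "trace (cof3 A) = l1 * l2 + l1 * l3 + l2 * l3"
proof -
  have P: "t^3 - trace A * t^2 + trace (cof3 A) * t - det A = (t - l1) * (t - l2) * (t - l3)" for t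
    using assms unfolding sorted_eigs_def charpoly_3 by blast
  from P[of 0] P[of 1] P[of "-1"] show
    "trace A = l1 + l2 + l3" "det A = l1 * l2 * l3" "trace (cof3 A) = l1 * l2 + l1 * l3 + l2 * l3"
    by (simp_all add: algebra_simps)
qed

lemma det_sub_id_sorted_eigs:
  assumes "sorted_eigs A l1 l2 l3"
  shows "det (A - mat 1) = (l1 - 1) * (l2 - 1) * (l3 - 1)"
proof -
  have "det (mat 1 - A) = (1 - l1) * (1 - l2) * (1 - l3)"
    using assms unfolding sorted_eigs_def by (metis scaleR_one)
  then show ?thesis
    using det_uminus_3[of "mat 1 - A"] by (simp add: algebra_simps)
qed

lemma det_square_sub_id_eq_0:
  assumes "transpose U = U" "\<forall>l1 l2 l3. sorted_eigs U l1 l2 l3 \<longrightarrow> l2 = 1"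
  shows "det (U ** U - mat 1) = 0"
proof -
  obtain l1 l2 l3 where eigs: "sorted_eigs U l1 l2 l3"
    using sorted_eigs_exists_symmetric[OF assms(1)] by blast
  with assms(2) have "l2 = 1"
    by blast
  have "U ** U - mat 1 = (U - mat 1) ** (U + mat 1)"
    by (simp add: matrix_diff_rdistrib matrix_add_ldistrib)
  then show ?thesis
    using det_sub_id_sorted_eigs[OF eigs] \<open>l2 = 1\<close> by (simp add: det_mul)
qed

text \<open>If one of three numbers is \<open>1\<close>, then \<open>l1 + l2 + l3 - l1 l2 l3 - 2 = - (x - 1) (y - 1)\<close>
  for the other two, \<open>x\<close> and \<open>y\<close>.\<close>

lemma middle_eq_one_if_straddling:
  fixes l1 l2 l3 :: real
  assumes "l1 \<le> l2" "l2 \<le> l3" "(l1 - 1) * (l2 - 1) * (l3 - 1) = 0"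
    and "l1 + l2 + l3 - l1 * l2 * l3 - 2 > 0"
  shows "l1 < 1 \<and> l2 = 1 \<and> 1 < l3"
proof -
  consider "l1 = 1" | "l2 = 1" | "l3 = 1"
    using assms(3) by auto
  then show ?thesis
  proof cases
    case 1
    then have "(l2 - 1) * (l3 - 1) < 0"
      using assms(4) by (simp add: algebra_simps)
    moreover have "(l2 - 1) * (l3 - 1) \<ge> 0"
      using assms(1,2) 1 by simp
    ultimately show ?thesis
      by simp
  next
    case 2
    then have "(1 - l1) * (l3 - 1) > 0"
      using assms(4) by (simp add: algebra_simps)
    then have "l1 \<noteq> 1" "l3 \<noteq> 1"
      by auto
    then show ?thesis
      using assms(1,2) 2 by simp
  next
    case 3
    then have "(l1 - 1) * (l2 - 1) < 0"
      using assms(4) by (simp add: algebra_simps)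
    moreover have "(l1 - 1) * (l2 - 1) \<ge> 0"
      using assms(1,2) 3 by (simp add: mult_nonpos_nonpos)
    ultimately show ?thesis
      by simp
  qed
qed

lemma sorted_eigs_straddle_one:
  assumes "sorted_eigs C l1 l2 l3" "det (C - mat 1) = 0" "trace C - det C - 2 > 0"
  shows "l1 < 1 \<and> l2 = 1 \<and> 1 < l3"
proof (rule middle_eq_one_if_straddling)
  show "l1 \<le> l2" "l2 \<le> l3"
    using assms(1) by (simp_all add: sorted_eigs_def)
  show "(l1 - 1) * (l2 - 1) * (l3 - 1) = 0"
    using assms(2) by (simp add: det_sub_id_sorted_eigs[OF assms(1)])
  show "l1 + l2 + l3 - l1 * l2 * l3 - 2 > 0"
    using assms(3) by (simp add: sorted_eigs_coeffs[OF assms(1)])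
qed

lemma sorted_eigs_outer_straddle_one:
  assumes "sorted_eigs U l1 1 l3" "trace (U ** U) - det (U ** U) - 2 > 0"
  shows "l1 < 1 \<and> 1 < l3"
proof -
  have "trace (U ** U) - det (U ** U) - 2 = (1 - l1^2) * (l3^2 - 1)"
    unfolding trace_square_3 det_mul sorted_eigs_coeffs[OF assms(1)]
    by (simp add: algebra_simps power2_eq_square)
  then have product: "(1 - l1^2) * (l3^2 - 1) > 0"
    using assms(2) by simp
  have "l1 \<noteq> 1" "l3 \<noteq> 1"
    using product by auto
  then show ?thesis
    using assms(1) by (simp add: sorted_eigs_def)
qed

section \<open>The twinning equation\<close>

lemma reflection_symmetric:
  "transpose (- mat 1 + 2 *\<^sub>R outer e e) = - mat 1 + 2 *\<^sub>R outer e e"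
  by (simp add: transpose_def vec_eq_iff outer_def mat_def mult.commute)

lemma reflection_involution:
  assumes "e \<bullet> e = 1"
  shows "(- mat 1 + 2 *\<^sub>R outer e e) ** (- mat 1 + 2 *\<^sub>R outer e e) = mat 1"
proof -
  have "(- mat 1 + 2 *\<^sub>R outer e e) ** (- mat 1 + 2 *\<^sub>R outer e e)
      = mat 1 + (4 * (e \<bullet> e) - 4) *\<^sub>R outer e e"
    by (simp add: vec_eq_iff forall_3 outer_def matrix_matrix_mult_def mat_def inner_vec_def
        sum_3 algebra_simps)
  then show ?thesis
    using assms by simp
qed

lemma det_conj_involution:
  fixes Q A :: "real^'n^'n"
  assumes "Q ** Q = mat 1"
  shows "det (Q ** A ** Q) = det A"
proof -
  have "det Q * det Q = 1"
    by (metis assms det_I det_mul)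
  then show ?thesis
    by (simp add: det_mul)
qed

lemma trace_conj_involution:
  fixes Q A :: "real^'n^'n"
  assumes "Q ** Q = mat 1"
  shows "trace (Q ** A ** Q) = trace A"
  by (metis assms matrix_mul_assoc matrix_mul_lid trace_mul_sym)

lemma det_conj_involution_sub_id:
  fixes Q A :: "real^'n^'n"
  assumes "Q ** Q = mat 1"
  shows "det (Q ** A ** Q - mat 1) = det (A - mat 1)"
proof -
  have "Q ** A ** Q - mat 1 = Q ** (A - mat 1) ** Q"
    using assms by (simp add: matrix_diff_ldistrib matrix_diff_rdistrib)
  then show ?thesis
    using assms by (simp add: det_conj_involution)
qed

lemma det_twin:
  fixes Q R U F :: "real^3^3"
  assumes "det R = 1" "Q ** Q = mat 1" "R ** (Q ** U ** Q) = F"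
  shows "det F = det U"
  by (metis assms det_conj_involution det_mul mult_1)

lemma cauchy_green_twin:
  fixes Q R U F :: "real^3^3"
  assumes "transpose U = U" "transpose Q = Q" "Q ** Q = mat 1" "transpose R ** R = mat 1"
    and "R ** (Q ** U ** Q) = F"
  shows "transpose F ** F = Q ** (U ** U) ** Q"
proof -
  have QQ: "X ** Q ** Q = X" for X :: "real^3^3"
    using assms(3) by (simp add: matrix_mul_assoc[symmetric])
  have "transpose F ** F = transpose (Q ** U ** Q) ** (transpose R ** R) ** (Q ** U ** Q)"
    unfolding assms(5)[symmetric] matrix_transpose_mul by (simp add: matrix_mul_assoc)
  also have "\<dots> = (Q ** U ** Q) ** (Q ** U ** Q)"
    using assms(1,2,4) by (simp add: matrix_transpose_mul matrix_mul_assoc)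
  also have "\<dots> = Q ** (U ** U) ** Q"
    by (simp add: matrix_mul_assoc QQ)
  finally show ?thesis .
qed

section \<open>The Cauchy-Green family\<close>

lemma cauchy_green_expand:
  assumes "transpose U = U"
  shows "(U + f *\<^sub>R outer n a) ** (U + f *\<^sub>R outer a n) =
    U ** U + f *\<^sub>R (outer (U *v a) n + outer n (U *v a)) + (f^2 * (a \<bullet> a)) *\<^sub>R outer n n"
  using symmetric_entry[OF assms, of 2 1] symmetric_entry[OF assms, of 3 1]
    symmetric_entry[OF assms, of 3 2]
  by (simp add: vec_eq_iff forall_3 matrix_matrix_mult_def matrix_vector_mult_def outer_def
      inner_vec_def sum_3 algebra_simps power2_eq_square)

lemma trace_cauchy_green:
  assumes "transpose U = U"
  shows "trace ((U + f *\<^sub>R outer n a) ** (U + f *\<^sub>R outer a n)) =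
    trace (U ** U) + 2 * f * ((U *v a) \<bullet> n) + f^2 * (a \<bullet> a) * (n \<bullet> n)"
proof -
  have "trace (c *\<^sub>R A) = c * trace A" for c and A :: "real^3^3"
    by (simp add: trace_def sum_distrib_left)
  then show ?thesis
    unfolding cauchy_green_expand[OF assms] by (simp add: trace_add trace_outer inner_commute)
qed

lemma det_cauchy_green:
  assumes "transpose U = U" "det (U + outer a n) = det U"
  shows "det ((U + f *\<^sub>R outer n a) ** (U + f *\<^sub>R outer a n)) = det (U ** U)"
proof -
  have "a \<bullet> (cof3 U *v n) = 0"
    using assms(2) by (simp add: det_add_outer)
  then have "det (U + f *\<^sub>R outer a n) = det U"
    using det_add_outer[of U "f *\<^sub>R a" n] by (simp add: outer_scaleR_left)
  then show ?thesis
    using transpose_add_outer[OF assms(1), of f a n] det_transpose by (metis det_mul)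
qed

lemma trace_cauchy_green_twin:
  assumes "transpose U = U" "trace ((U + outer n a) ** (U + outer a n)) = trace (U ** U)"
  shows "trace ((U + f *\<^sub>R outer n a) ** (U + f *\<^sub>R outer a n)) =
    trace (U ** U) - f * (1 - f) * (a \<bullet> a) * (n \<bullet> n)"
proof -
  have at_1: "2 * ((U *v a) \<bullet> n) = - (a \<bullet> a) * (n \<bullet> n)"
    using assms(2) trace_cauchy_green[OF assms(1), of 1] by simp
  have "trace ((U + f *\<^sub>R outer n a) ** (U + f *\<^sub>R outer a n)) =
      trace (U ** U) + f * (2 * ((U *v a) \<bullet> n)) + f^2 * (a \<bullet> a) * (n \<bullet> n)"
    unfolding trace_cauchy_green[OF assms(1)] by (simp add: mult.assoc)
  also have "\<dots> = trace (U ** U) - f * (1 - f) * (a \<bullet> a) * (n \<bullet> n)"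
    unfolding at_1 by (simp add: power2_eq_square algebra_simps)
  finally show ?thesis .
qed

lemma det_cauchy_green_sub_id:
  assumes "transpose U = U" "det (U ** U - mat 1) = 0"
    and "(U *v a) \<bullet> (cof3 (U ** U - mat 1) *v n) = 0"
    and "det ((U + outer n a) ** (U + outer a n) - mat 1) = 0"
  shows "det ((U + f *\<^sub>R outer n a) ** (U + f *\<^sub>R outer a n) - mat 1) = 0"
proof -
  define D where "D = U ** U - mat 1"
  define \<kappa> where
    "\<kappa> = (a \<bullet> a) * (n \<bullet> (cof3 D *v n)) - ((U *v a) \<times> n) \<bullet> (D *v ((U *v a) \<times> n))"
  have "transpose D = transpose (U ** U) - transpose (mat 1)"
    by (simp add: D_def transpose_def vec_eq_iff)
  then have "transpose D = D"
    by (simp add: D_def matrix_transpose_mul assms(1) transpose_mat)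
  have "det D = 0" "(U *v a) \<bullet> (cof3 D *v n) = 0"
    using assms(2,3) by (simp_all add: D_def)
  have regroup: "X + Y + Z - M = (X - M) + Y + Z" for X Y Z M :: "real^3^3"
    by simp
  have quadratic: "det ((U + g *\<^sub>R outer n a) ** (U + g *\<^sub>R outer a n) - mat 1) = g^2 * \<kappa>"
    for g
    unfolding cauchy_green_expand[OF assms(1)] regroup D_def[symmetric]
      det_symmetric_rank_two_update[OF \<open>transpose D = D\<close>] \<kappa>_def
    using \<open>det D = 0\<close> \<open>(U *v a) \<bullet> (cof3 D *v n) = 0\<close> by (simp add: algebra_simps)
  have "\<kappa> = 0"
    using quadratic[of 1] assms(4) by simp
  then show ?thesis
    using quadratic[of f] by simp
qed

lemma cauchy_green_twin_family:
  fixes U R :: "real^3^3" and e a n :: "real^3"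
  assumes U_sym: "transpose U = U" and e_unit: "norm e = 1"
    and R_SO3: "transpose R ** R = mat 1" "det R = 1"
    and twin: "R ** ((- mat 1 + 2 *\<^sub>R outer e e) ** U ** (- mat 1 + 2 *\<^sub>R outer e e))
      = U + outer a n"
    and CC1: "\<forall>l1 l2 l3. sorted_eigs U l1 l2 l3 \<longrightarrow> l2 = 1"
    and CC2: "a \<bullet> ((U ** cof3 (U ** U - mat 1)) *v n) = 0"
  shows "det ((U + f *\<^sub>R outer n a) ** (U + f *\<^sub>R outer a n) - mat 1) = 0"
    and "det ((U + f *\<^sub>R outer n a) ** (U + f *\<^sub>R outer a n)) = det (U ** U)"
    and "trace ((U + f *\<^sub>R outer n a) ** (U + f *\<^sub>R outer a n)) =
      trace (U ** U) - f * (1 - f) * (a \<bullet> a) * (n \<bullet> n)"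
proof -
  define Q where "Q = - mat 1 + 2 *\<^sub>R outer e e"
  have "e \<bullet> e = 1"
    using e_unit by (simp add: norm_eq_1)
  then have Q: "transpose Q = Q" "Q ** Q = mat 1"
    unfolding Q_def by (simp_all only: reflection_symmetric reflection_involution)
  have F: "R ** (Q ** U ** Q) = U + outer a n"
    using twin unfolding Q_def .
  have C1: "(U + outer n a) ** (U + outer a n) = Q ** (U ** U) ** Q"
    using cauchy_green_twin[OF U_sym Q R_SO3(1) F] transpose_add_outer[OF U_sym, of 1 a n]
    by (simp only: scaleR_one)
  have det_D: "det (U ** U - mat 1) = 0"
    by (rule det_square_sub_id_eq_0[OF U_sym CC1])
  have "(U *v a) \<bullet> (cof3 (U ** U - mat 1) *v n) = a \<bullet> (U *v (cof3 (U ** U - mat 1) *v n))"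
    by (rule symmetric_inner_commute[OF U_sym, symmetric])
  also have "\<dots> = 0"
    using CC2 by (simp add: matrix_vector_mul_assoc)
  finally have CC2': "(U *v a) \<bullet> (cof3 (U ** U - mat 1) *v n) = 0" .
  have "det ((U + outer n a) ** (U + outer a n) - mat 1) = 0"
    unfolding C1 det_conj_involution_sub_id[OF Q(2)] by (rule det_D)
  then show "det ((U + f *\<^sub>R outer n a) ** (U + f *\<^sub>R outer a n) - mat 1) = 0"
    by (rule det_cauchy_green_sub_id[OF U_sym det_D CC2'])
  show "det ((U + f *\<^sub>R outer n a) ** (U + f *\<^sub>R outer a n)) = det (U ** U)"
    using det_cauchy_green[OF U_sym det_twin[OF R_SO3(2) Q(2) F]] .
  have "trace ((U + outer n a) ** (U + outer a n)) = trace (U ** U)"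
    unfolding C1 by (rule trace_conj_involution[OF Q(2)])
  then show "trace ((U + f *\<^sub>R outer n a) ** (U + f *\<^sub>R outer a n)) =
      trace (U ** U) - f * (1 - f) * (a \<bullet> a) * (n \<bullet> n)"
    by (rule trace_cauchy_green_twin[OF U_sym])
qed

theorem corollary1:
  fixes U R :: "real^3^3" and e a n :: "real^3"
  assumes U_sym: "transpose U = U"
    and U_pd: "\<forall>x. x \<noteq> 0 \<longrightarrow> x \<bullet> (U *v x) > 0"
    and e_unit: "norm e = 1"
    and R_SO3: "transpose R ** R = mat 1" "det R = 1"
    and a_nz: "a \<noteq> 0" and n_nz: "n \<noteq> 0"
    and twin: "R ** ((- mat 1 + 2 *\<^sub>R outer e e) ** U ** (- mat 1 + 2 *\<^sub>R outer e e))
               = U + outer a n"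
    and CC1: "\<forall>l1 l2 l3. sorted_eigs U l1 l2 l3 \<longrightarrow> l2 = 1"
    and CC2: "a \<bullet> ((U ** cof3 (U ** U - mat 1)) *v n) = 0"
    and CC3: "trace (U ** U) - det (U ** U) - (norm a)\<^sup>2 * (norm n)\<^sup>2 / 4 - 2 \<ge> 0"
  shows "(\<forall>f l1 l2 l3. 0 \<le> f \<and> f \<le> 1 \<and> f \<noteq> 1/2 \<and>
            sorted_eigs ((U + f *\<^sub>R outer n a) ** (U + f *\<^sub>R outer a n)) l1 l2 l3
            \<longrightarrow> l1 < 1 \<and> l2 = 1 \<and> 1 < l3)
       \<and> (\<forall>l1 l2 l3. sorted_eigs U l1 l2 l3 \<longrightarrow> l1 < 1 \<and> 1 < l3)"
proof -
  let ?C = "\<lambda>f. (U + f *\<^sub>R outer n a) ** (U + f *\<^sub>R outer a n)"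
  note C = cauchy_green_twin_family[OF U_sym e_unit R_SO3 twin CC1 CC2]
  define k where "k = (a \<bullet> a) * (n \<bullet> n)"
  have "k > 0"
    using a_nz n_nz by (simp add: k_def)
  have gap: "trace (U ** U) - det (U ** U) - 2 - k / 4 \<ge> 0"
    using CC3 by (simp add: k_def power2_norm_eq_inner)
  show ?thesis
  proof (rule conjI; intro allI impI)
    fix f l1 l2 l3
    assume f: "0 \<le> f \<and> f \<le> 1 \<and> f \<noteq> 1/2 \<and> sorted_eigs (?C f) l1 l2 l3"
    have "trace (?C f) - det (?C f) - 2
        = (trace (U ** U) - det (U ** U) - 2 - k / 4) + k * (f - 1/2)^2"
      by (simp add: C(2,3) k_def power2_eq_square algebra_simps)
    moreover have "k * (f - 1/2)^2 > 0"
      using \<open>k > 0\<close> f by simp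
    ultimately have "trace (?C f) - det (?C f) - 2 > 0"
      using gap by linarith
    then show "l1 < 1 \<and> l2 = 1 \<and> 1 < l3"
      using f C(1) sorted_eigs_straddle_one by blast
  next
    fix l1 l2 l3
    assume eigs: "sorted_eigs U l1 l2 l3"
    with CC1 have "l2 = 1"
      by blast
    with eigs have "sorted_eigs U l1 1 l3"
      by simp
    moreover have "trace (U ** U) - det (U ** U) - 2 > 0"
      using gap \<open>k > 0\<close> by linarith
    ultimately show "l1 < 1 \<and> 1 < l3"
      by (rule sorted_eigs_outer_straddle_one)
  qed
qed

end
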